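(* Let $p$ be a prime, $u_1>u_2\ge 1$ integers, $s_1=p^{u_1}$, $s_2=p^{u_2}$, $F=\mathrm{GF}(s_1)$ and $G=\mathrm{GF}(s_2)$ represented as below, and let $\delta$ be either the truncation projection $\phi$ or the modulus projection $\varphi$. If $D$ is a difference matrix $D(b,c,s_1)$ with entries in $F$ (over the additive group of $F$), then $\delta(D)$ is a difference matrix $D(b,c,s_2)$ over the additive group of $G$.
   Context: $F$ is represented as the set of polynomials over $\mathrm{GF}(p)$ of degree less than $u_1$ with arithmetic modulo an irreducible polynomial $p_1(x)$ of degree $u_1$; $G$ is represented as the polynomials over $\mathrm{GF}(p)$ of degree less than $u_2$ with arithmetic modulo an irreducible polynomial $p_2(x)$ of degree $u_2$. The truncation projection is $\phi(a_0+a_1x+\cdots+a_{u_1-1}x^{u_1-1})=a_0+\cdots+a_{u_2-1}x^{u_2-1}$; the modulus projection is $\varphi(f(x))=f(x)\bmod p_2(x)$. For an array $D$, $\delta(D)$ denotes entrywise application of $\delta$. A difference matrix $D(b,c,g)$ over a finite abelian group of order $g$ is a $b\times c$ array with entries in the group such that, for any two distinct columns, their entrywise difference contains every group element equally often. *)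

theory Defs
  imports "Berlekamp_Zassenhaus.Finite_Field" "HOL-Computational_Algebra.Polynomial"
begin

text \<open>GF(p) is the type 'p mod_ring (CARD('p) = p prime).  GF(p^u) is represented
  as the polynomials over GF(p) of degree less than u (arithmetic modulo an
  irreducible polynomial of degree u; the additive group is polynomial addition).\<close>

definition gf_carrier :: "nat \<Rightarrow> ('p::prime_card mod_ring) poly set" where
  "gf_carrier u = {f. degree f < u}"

definition trunc_proj :: "nat \<Rightarrow> 'a::comm_ring_1 poly \<Rightarrow> 'a poly" where
  "trunc_proj u f = (\<Sum>i<u. monom (coeff f i) i)"

definition mod_proj :: "'a::field poly \<Rightarrow> 'a poly \<Rightarrow> 'a poly" where
  "mod_proj p2 f = f mod p2"

definition difference_matrix ::
  "nat \<Rightarrow> nat \<Rightarrow> nat \<Rightarrow> 'a::ab_group_add set \<Rightarrow> (nat \<Rightarrow> nat \<Rightarrow> 'a) \<Rightarrow> bool" where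
  "difference_matrix b c g S D \<longleftrightarrow>
     card S = g \<and>
     (\<forall>i<b. \<forall>j<c. D i j \<in> S) \<and>
     (\<forall>j1<c. \<forall>j2<c. j1 \<noteq> j2 \<longrightarrow>
        (\<exists>lam. \<forall>x\<in>S. card {i. i < b \<and> D i j1 - D i j2 = x} = lam))"

end

theory Submission
  imports Defs
begin

text \<open>A projection \<open>\<delta>\<close> as in the statement restricts to an additive homomorphism from
  \<open>GF(p^u\<^sub>1)\<close> onto \<open>GF(p^u\<^sub>2)\<close> (it fixes the polynomials of degree less than \<open>u\<^sub>2\<close>). All its
  fibres are cosets of the kernel and hence have the same size \<open>k\<close>. For two distinct columns
  of \<open>D\<close>, the rows in which the projected difference equals \<open>x\<close> are the rows in which the
  original difference lies in the fibre over \<open>x\<close>, so every \<open>x\<close> occurs exactly \<open>\<lambda>k\<close> times.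
  Neither the irreducibility of \<open>p\<^sub>1\<close>, \<open>p\<^sub>2\<close> nor multiplication plays any role: only the
  additive groups are involved.\<close>

lemma card_fibre_eq_card_kernel:
  fixes d :: "'a::ab_group_add \<Rightarrow> 'b::ab_group_add"
  assumes add_closed: "\<And>x y. x \<in> S \<Longrightarrow> y \<in> S \<Longrightarrow> x + y \<in> S"
    and diff_closed: "\<And>x y. x \<in> S \<Longrightarrow> y \<in> S \<Longrightarrow> x - y \<in> S"
    and hom: "\<And>x y. x \<in> S \<Longrightarrow> y \<in> S \<Longrightarrow> d (x - y) = d x - d y"
    and z: "z \<in> d ` S"
  shows "card {x \<in> S. d x = z} = card {x \<in> S. d x = 0}"
proof -
  obtain x0 where x0: "x0 \<in> S" "d x0 = z" using z by blast
  have "bij_betw (\<lambda>x. x - x0) {x \<in> S. d x = z} {x \<in> S. d x = 0}"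
  proof (rule bij_betw_byWitness[where f' = "\<lambda>y. y + x0"])
    show "(\<lambda>x. x - x0) ` {x \<in> S. d x = z} \<subseteq> {x \<in> S. d x = 0}"
      using x0 diff_closed hom by auto
    show "(\<lambda>y. y + x0) ` {x \<in> S. d x = 0} \<subseteq> {x \<in> S. d x = z}"
    proof (rule image_subsetI)
      fix y assume y: "y \<in> {x \<in> S. d x = 0}"
      then have "y + x0 \<in> S" using x0 add_closed by blast
      moreover have "d (y + x0) - z = 0"
        using hom[OF \<open>y + x0 \<in> S\<close> \<open>x0 \<in> S\<close>] x0 y by simp
      ultimately show "y + x0 \<in> {x \<in> S. d x = z}" by simp
    qed
  qed auto
  then show ?thesis by (rule bij_betw_same_card)
qed

lemma difference_matrix_hom_image:
  fixes d :: "'a::ab_group_add \<Rightarrow> 'b::ab_group_add"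
  assumes dm: "difference_matrix b c g S D"
    and "finite S"
    and add_closed: "\<And>x y. x \<in> S \<Longrightarrow> y \<in> S \<Longrightarrow> x + y \<in> S"
    and diff_closed: "\<And>x y. x \<in> S \<Longrightarrow> y \<in> S \<Longrightarrow> x - y \<in> S"
    and hom: "\<And>x y. x \<in> S \<Longrightarrow> y \<in> S \<Longrightarrow> d (x - y) = d x - d y"
    and image: "d ` S = T"
    and "card T = h"
  shows "difference_matrix b c h T (\<lambda>i j. d (D i j))"
proof -
  have entries: "\<forall>i<b. \<forall>j<c. D i j \<in> S"
    and balanced: "\<forall>j1<c. \<forall>j2<c. j1 \<noteq> j2 \<longrightarrow>
        (\<exists>lam. \<forall>x\<in>S. card {i. i < b \<and> D i j1 - D i j2 = x} = lam)"
    using dm unfolding difference_matrix_def by auto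
  define fibre where "fibre z = {x \<in> S. d x = z}" for z
  have "\<exists>lam. \<forall>z\<in>T. card {i. i < b \<and> d (D i j1) - d (D i j2) = z} = lam"
    if j: "j1 < c" "j2 < c" "j1 \<noteq> j2" for j1 j2
  proof -
    obtain lam where lam: "\<forall>x\<in>S. card {i. i < b \<and> D i j1 - D i j2 = x} = lam"
      using balanced j by blast
    have "card {i. i < b \<and> d (D i j1) - d (D i j2) = z} = lam * card (fibre 0)"
      if "z \<in> T" for z
    proof -
      have "{i. i < b \<and> d (D i j1) - d (D i j2) = z}
          = (\<Union>x\<in>fibre z. {i. i < b \<and> D i j1 - D i j2 = x})"
        using entries j diff_closed hom unfolding fibre_def by auto
      also have "card \<dots> = (\<Sum>x\<in>fibre z. card {i. i < b \<and> D i j1 - D i j2 = x})"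
        using \<open>finite S\<close> by (intro card_UN_disjoint) (auto simp: fibre_def)
      also have "\<dots> = lam * card (fibre z)"
        using lam by (simp add: fibre_def)
      also have "card (fibre z) = card (fibre 0)"
        unfolding fibre_def
        using card_fibre_eq_card_kernel[OF add_closed diff_closed hom] image \<open>z \<in> T\<close> by blast
      finally show ?thesis .
    qed
    then show ?thesis by blast
  qed
  moreover have "\<forall>i<b. \<forall>j<c. d (D i j) \<in> T"
    using entries image by blast
  ultimately show ?thesis
    using \<open>card T = h\<close> unfolding difference_matrix_def by blast
qed

lemma card_poly_degree_less:
  assumes "n > 0"
  shows "card {f :: 'a::{zero,finite} poly. degree f < n} = CARD('a) ^ n"
proof -
  have "bij_betw (\<lambda>f. map (coeff f) [0..<n]) {f :: 'a poly. degree f < n}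
          {xs. set xs \<subseteq> UNIV \<and> length xs = n}"
  proof (rule bij_betw_byWitness[where f' = Poly])
    show "\<forall>f\<in>{f :: 'a poly. degree f < n}. Poly (map (coeff f) [0..<n]) = f"
      by (auto intro!: poly_eqI simp: coeff_Poly nth_default_def coeff_eq_0)
    show "\<forall>xs\<in>{xs. set xs \<subseteq> UNIV \<and> length xs = n}. map (coeff (Poly xs)) [0..<n] = xs"
      by (auto intro!: nth_equalityI simp: coeff_Poly nth_default_def)
    show "Poly ` {xs. set xs \<subseteq> UNIV \<and> length xs = n} \<subseteq> {f :: 'a poly. degree f < n}"
    proof (rule image_subsetI)
      fix xs :: "'a list" assume "xs \<in> {xs. set xs \<subseteq> UNIV \<and> length xs = n}"
      then have "degree (Poly xs) \<le> n - 1"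
        by (intro degree_le) (auto simp: coeff_Poly nth_default_def)
      then show "Poly xs \<in> {f :: 'a poly. degree f < n}" using assms by simp
    qed
  qed auto
  then show ?thesis
    using card_lists_length_eq[of "UNIV :: 'a set" n] by (simp add: bij_betw_same_card)
qed

lemma card_gf_carrier:
  "u \<ge> 1 \<Longrightarrow> card (gf_carrier u :: 'p::prime_card mod_ring poly set) = CARD('p) ^ u"
  unfolding gf_carrier_def by (simp add: card_poly_degree_less)

lemma gf_carrier_add: "f \<in> gf_carrier u \<Longrightarrow> g \<in> gf_carrier u \<Longrightarrow> f + g \<in> gf_carrier u"
  unfolding gf_carrier_def by (simp add: degree_add_less)

lemma gf_carrier_diff: "f \<in> gf_carrier u \<Longrightarrow> g \<in> gf_carrier u \<Longrightarrow> f - g \<in> gf_carrier u"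
  unfolding gf_carrier_def by (simp add: degree_diff_less)

lemma difference_matrix_gf_projection:
  fixes D :: "nat \<Rightarrow> nat \<Rightarrow> 'p::prime_card mod_ring poly"
    and \<delta> :: "'p mod_ring poly \<Rightarrow> 'p mod_ring poly"
  assumes dm: "difference_matrix b c (CARD('p) ^ u1) (gf_carrier u1) D"
    and "u2 \<ge> 1"
    and image: "\<delta> ` gf_carrier u1 = gf_carrier u2"
    and hom: "\<And>f g. \<delta> (f - g) = \<delta> f - \<delta> g"
  shows "difference_matrix b c (CARD('p) ^ u2) (gf_carrier u2) (\<lambda>i j. \<delta> (D i j))"
proof -
  have "card (gf_carrier u1 :: 'p mod_ring poly set) > 0"
    using dm unfolding difference_matrix_def by simp
  then have "finite (gf_carrier u1 :: 'p mod_ring poly set)"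
    by (rule card_ge_0_finite)
  then show ?thesis
    by (rule difference_matrix_hom_image[OF dm _ _ _ _ image card_gf_carrier[OF \<open>u2 \<ge> 1\<close>]])
      (simp_all add: gf_carrier_add gf_carrier_diff hom)
qed

lemma coeff_trunc_proj: "coeff (trunc_proj u f) n = (if n < u then coeff f n else 0)"
  unfolding trunc_proj_def by (simp add: coeff_sum coeff_monom)

lemma trunc_proj_diff: "trunc_proj u (f - g) = trunc_proj u f - trunc_proj u g"
  by (intro poly_eqI) (simp add: coeff_trunc_proj)

lemma image_trunc_proj_gf_carrier:
  assumes "1 \<le> u2" "u2 \<le> u1"
  shows "trunc_proj u2 ` gf_carrier u1 = (gf_carrier u2 :: 'p::prime_card mod_ring poly set)"
proof -
  have "trunc_proj u2 f \<in> gf_carrier u2" for f :: "'p mod_ring poly"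
  proof -
    have "degree (trunc_proj u2 f) \<le> u2 - 1"
      by (rule degree_le) (auto simp: coeff_trunc_proj)
    then show ?thesis using assms unfolding gf_carrier_def by simp
  qed
  moreover have "trunc_proj u2 f = f" if "f \<in> gf_carrier u2" for f :: "'p mod_ring poly"
    using that unfolding gf_carrier_def by (intro poly_eqI) (simp add: coeff_trunc_proj coeff_eq_0)
  moreover have "gf_carrier u2 \<subseteq> (gf_carrier u1 :: 'p mod_ring poly set)"
    using assms unfolding gf_carrier_def by auto
  ultimately show ?thesis by force
qed

lemma image_mod_proj_gf_carrier:
  fixes p :: "'p::prime_card mod_ring poly"
  assumes "degree p = u2" "1 \<le> u2" "u2 \<le> u1"
  shows "mod_proj p ` gf_carrier u1 = gf_carrier u2"
proof -
  have "p \<noteq> 0" using assms by auto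
  then have "mod_proj p f \<in> gf_carrier u2" for f
    using assms unfolding gf_carrier_def mod_proj_def
    by (cases "f mod p = 0") (auto intro: degree_mod_less')
  moreover have "mod_proj p f = f" if "f \<in> gf_carrier u2" for f
    using that assms unfolding gf_carrier_def mod_proj_def by (simp add: mod_poly_less)
  moreover have "gf_carrier u2 \<subseteq> gf_carrier u1"
    using assms unfolding gf_carrier_def by auto
  ultimately show ?thesis by force
qed

theorem lemma5:
  fixes p1 p2 :: "('p::prime_card mod_ring) poly"
    and u1 u2 b c :: nat
    and D :: "nat \<Rightarrow> nat \<Rightarrow> 'p mod_ring poly"
  assumes "u1 > u2" and "u2 \<ge> 1"
    and "irreducible p1" and "degree p1 = u1"
    and "irreducible p2" and "degree p2 = u2"
    and "difference_matrix b c (CARD('p) ^ u1) (gf_carrier u1) D"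
  shows "difference_matrix b c (CARD('p) ^ u2) (gf_carrier u2)
           (\<lambda>i j. trunc_proj u2 (D i j))
       \<and> difference_matrix b c (CARD('p) ^ u2) (gf_carrier u2)
           (\<lambda>i j. mod_proj p2 (D i j))"
proof
  have "u2 \<le> u1" using \<open>u1 > u2\<close> by simp
  show "difference_matrix b c (CARD('p) ^ u2) (gf_carrier u2) (\<lambda>i j. trunc_proj u2 (D i j))"
    using \<open>u2 \<ge> 1\<close> \<open>u2 \<le> u1\<close>
    by (intro difference_matrix_gf_projection[OF assms(7)] image_trunc_proj_gf_carrier trunc_proj_diff)
  show "difference_matrix b c (CARD('p) ^ u2) (gf_carrier u2) (\<lambda>i j. mod_proj p2 (D i j))"
    using \<open>degree p2 = u2\<close> \<open>u2 \<ge> 1\<close> \<open>u2 \<le> u1\<close>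
    by (intro difference_matrix_gf_projection[OF assms(7)] image_mod_proj_gf_carrier)
      (simp_all add: mod_proj_def poly_mod_diff_left)
qed

end
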